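(* For every $j\in\tfrac12\mathbb{N}^+$ and $1\le a,b\le 2j+1$, the $(a,b)$-entry of $K^{(j)}(t)$ equals \[ K^{(j)}_{(a,b)}(t)=\psi(a,b,j)\,t^{b-a-2j}\,y^{b-2j-1}\widetilde\Delta^{(-2j)}(-t^2)x^{1-a}, \qquad \psi(a,b,j)=q^{\rho(a,b,j)}\big([2j]_q^!\big)^{-1}\Big(\frac{[b-1]_q^![2j+1-a]_q^!}{[a-1]_q^![2j+1-b]_q^!}\Big)^{1/2}. \]
   Context: $\mathbb{F}$ is a field of characteristic zero in which every element has a square root; $q\in\mathbb{F}$ is nonzero and not a root of unity, with a fixed square root $q^{1/2}$ ($q^{k/2}:=(q^{1/2})^k$). Square roots $(\cdot)^{1/2}$ of ratios below are fixed choices in $\mathbb{F}$, chosen so that $\big(\frac{B}{A}\big)^{1/2}=\frac{B}{A}\big(\frac{A}{B}\big)^{1/2}$. $[n]_q=\frac{q^n-q^{-n}}{q-q^{-1}}$, $[n]_q^!=[n]_q\cdots[1]_q$, $[0]_q^!=1$. $\tfrac12\mathbb{N}^+=\{\tfrac12,1,\tfrac32,\dots\}$. $\mathbb{V}$ is the free algebra on letters $x,y$ with basis the words ($\mathbf 1$ empty word); $t$ an indeterminate. $\bar x=1,\bar y=-1$; a word $a_1\cdots a_n$ is Catalan if $\bar a_1+\dots+\bar a_i\ge0$ ($i<n$) and $\bar a_1+\dots+\bar a_n=0$; $\mathrm{Cat}_n$ = Catalan words of length $2n$. $\Delta^{(m)}_n=\sum_{a_1\cdots a_{2n}\in\mathrm{Cat}_n}\prod_{i=1}^{2n}[\bar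 a_1+\dots+\bar a_{i-1}+m(\bar a_i+1)/2]_q\,a_1\cdots a_{2n}$, $\Delta^{(m)}(t)=\sum_n\Delta^{(m)}_nt^n$; $\widetilde\Delta^{(m)}_n$ is obtained from $\Delta^{(m)}_n$ by interchanging $x$ and $y$ in every word, $\widetilde\Delta^{(m)}(t)=\sum_n\widetilde\Delta^{(m)}_nt^n$; $\Delta^{(m)}(-t^2)=\sum_n(-1)^n\Delta^{(m)}_nt^{2n}$, etc. Deletion: $x^{-1}w$ deletes a leading $x$ of a word $w$ (result $0$ if $w$ does not start with $x$, including $w=\mathbf 1$); $y^{-1}w$, $wx^{-1}$, $wy^{-1}$ analogously (leading $y$, trailing $x$, trailing $y$); extended linearly and coefficientwise; negative exponent $-k$ means $k$-fold application, exponent $0$ the identity. $\rho(a,b,j)=(a^2+b^2+6j^2+4ab-6aj-6bj-6a-6b+13j+6)/2$. $K^{(j)}(t)$ is the $(2j+1)\times(2j+1)$ matrix with $K^{(j)}_{(a,b)}(t)=\varphi(a,b,j)t^{a-b-2j}x^{1-b}\Delta^{(-2j)}(-t^2)y^{a-2j-1}$, where $\varphi(a,b,j)=q^{\rho(a,b,j)}([2j]_q^!)^{-1}\big(\frac{[a-1]_q^![2j+1-b]_q^!}{[b-1]_q^![2j+1-a]_q^!}\big)^{1/2}$. *)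

theory Defs
  imports Complex_Main
begin

text \<open>Letters of the free algebra V on x, y.  A word is a list of letters;
  an element of V is represented by its coefficient function on words
  (word \<Rightarrow> field element), and a formal (Laurent) series in t with
  coefficients in V by its coefficient function int \<Rightarrow> word \<Rightarrow> field element
  (coefficient of t^k w).\<close>

datatype letter = X | Y

type_synonym word = "letter list"
type_synonym 'a vel = "word \<Rightarrow> 'a"
type_synonym 'a tser = "int \<Rightarrow> word \<Rightarrow> 'a"

fun bar :: "letter \<Rightarrow> int" where
  "bar X = 1" | "bar Y = -1"

fun swap_letter :: "letter \<Rightarrow> letter" where
  "swap_letter X = Y" | "swap_letter Y = X"

definition height :: "word \<Rightarrow> int" where
  "height w = sum_list (map bar w)"

definition catalan :: "word \<Rightarrow> bool" where
  "catalan w \<longleftrightarrow> (\<forall>i<length w. 0 \<le> height (take i w)) \<and> height w = 0"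

definition Cat :: "nat \<Rightarrow> word set" where
  "Cat n = {w. catalan w \<and> length w = 2 * n}"

definition qint :: "'a::field \<Rightarrow> int \<Rightarrow> 'a" where
  "qint q k = (q powi k - q powi (-k)) / (q - inverse q)"

definition qfact :: "'a::field \<Rightarrow> nat \<Rightarrow> 'a" where
  "qfact q n = (\<Prod>i=1..n. qint q (int i))"

definition Delta :: "'a::field \<Rightarrow> int \<Rightarrow> nat \<Rightarrow> 'a vel" where
  "Delta q m n w = (if w \<in> Cat n then
      (\<Prod>i<length w. qint q (height (take i w) + m * ((bar (w ! i) + 1) div 2)))
    else 0)"

definition DeltaT :: "'a::field \<Rightarrow> int \<Rightarrow> nat \<Rightarrow> 'a vel" where
  "DeltaT q m n w = Delta q m n (map swap_letter w)"

text \<open>For D = (D_n)_n, the series  sum_n D_n (-t^2)^n = sum_n (-1)^n D_n t^(2n).\<close>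
definition ser_neg_sq :: "(nat \<Rightarrow> 'a::field vel) \<Rightarrow> 'a tser" where
  "ser_neg_sq D k w = (if 0 \<le> k \<and> even k then (-1) ^ (nat k div 2) * D (nat k div 2) w else 0)"

text \<open>Left action of L^e on V (e \<le> 0: (-e)-fold deletion of a leading L;
  e > 0: left multiplication by L^e), extended coefficientwise to series.\<close>
definition lpow :: "letter \<Rightarrow> int \<Rightarrow> 'a::zero vel \<Rightarrow> 'a vel" where
  "lpow L e f w = (if e \<le> 0 then f (replicate (nat (-e)) L @ w)
     else if take (nat e) w = replicate (nat e) L then f (drop (nat e) w) else 0)"

text \<open>Right action of L^e on V (e \<le> 0: (-e)-fold deletion of a trailing L;
  e > 0: right multiplication by L^e).\<close>
definition rpow :: "letter \<Rightarrow> int \<Rightarrow> 'a::zero vel \<Rightarrow> 'a vel" where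
  "rpow L e f w = (if e \<le> 0 then f (w @ replicate (nat (-e)) L)
     else if drop (length w - nat e) w = replicate (nat e) L \<and> nat e \<le> length w
          then f (take (length w - nat e) w) else 0)"

definition lpow_s :: "letter \<Rightarrow> int \<Rightarrow> 'a::zero tser \<Rightarrow> 'a tser" where
  "lpow_s L e S k = lpow L e (S k)"

definition rpow_s :: "letter \<Rightarrow> int \<Rightarrow> 'a::zero tser \<Rightarrow> 'a tser" where
  "rpow_s L e S k = rpow L e (S k)"

definition tmul :: "'a::times \<Rightarrow> int \<Rightarrow> 'a tser \<Rightarrow> 'a tser" where
  "tmul c e S k w = c * S (k - e) w"

text \<open>rho(a,b,j) (a rational number) and q^r := (q^(1/2))^(2r) for r with 2r integer.\<close>
definition rho :: "int \<Rightarrow> int \<Rightarrow> rat \<Rightarrow> rat" where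
  "rho a b j = (of_int a ^ 2 + of_int b ^ 2 + 6 * j ^ 2 + 4 * of_int a * of_int b
      - 6 * of_int a * j - 6 * of_int b * j - 6 * of_int a - 6 * of_int b + 13 * j + 6) / 2"

definition qhpow :: "'a::field \<Rightarrow> rat \<Rightarrow> 'a" where
  "qhpow qh r = qh powi \<lfloor>2 * r\<rfloor>"

text \<open>Here n = 2j (so j = n/2 with n \<ge> 1), and sr is the fixed square-root choice.
  The numerator/denominator of the ratio under the square root in phi:\<close>
definition ratN :: "'a::field \<Rightarrow> nat \<Rightarrow> nat \<Rightarrow> nat \<Rightarrow> 'a" where
  "ratN q n a b = qfact q (a - 1) * qfact q (n + 1 - b)"

definition ratD :: "'a::field \<Rightarrow> nat \<Rightarrow> nat \<Rightarrow> nat \<Rightarrow> 'a" where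
  "ratD q n a b = qfact q (b - 1) * qfact q (n + 1 - a)"

definition phi :: "'a::field \<Rightarrow> 'a \<Rightarrow> ('a \<Rightarrow> 'a) \<Rightarrow> nat \<Rightarrow> nat \<Rightarrow> nat \<Rightarrow> 'a" where
  "phi q qh sr n a b = qhpow qh (rho (int a) (int b) (of_nat n / 2)) * inverse (qfact q n)
     * sr (ratN q n a b / ratD q n a b)"

definition psi :: "'a::field \<Rightarrow> 'a \<Rightarrow> ('a \<Rightarrow> 'a) \<Rightarrow> nat \<Rightarrow> nat \<Rightarrow> nat \<Rightarrow> 'a" where
  "psi q qh sr n a b = qhpow qh (rho (int a) (int b) (of_nat n / 2)) * inverse (qfact q n)
     * sr (ratD q n a b / ratN q n a b)"

definition Kmat :: "'a::field \<Rightarrow> 'a \<Rightarrow> ('a \<Rightarrow> 'a) \<Rightarrow> nat \<Rightarrow> nat \<Rightarrow> nat \<Rightarrow> 'a tser" where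
  "Kmat q qh sr n a b = tmul (phi q qh sr n a b) (int a - int b - int n)
     (lpow_s X (1 - int b) (rpow_s Y (int a - int n - 1) (ser_neg_sq (Delta q (- int n)))))"

end

theory Submission
  imports Defs
begin

text \<open>The coefficient of a Catalan word in Delta^(-2j) is the weight of its Dyck path: an up-step
  x from height h contributes [h - 2j] and a down-step y contributes [h]. Since [0] = 0, only
  paths inside the strip 0 <= h <= 2j count, and the reflection h |-> 2j - h, which interchanges
  x and y, changes the sign of every step weight. The phi-form of an entry is read off the
  bordered word x^(b-1) w y^(2j+1-a), the psi-form off x^(2j+1-b) w~ y^(a-1), whose middle part
  is the reflected path of w. Both path weights factor into the weight of w and the weights of
  the border runs, which are quotients of q-factorials, and the ratio of these is exactly
  phi/psi.\<close>

lemma qint_uminus: "qint q (- k) = - qint q k"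
  by (simp add: qint_def minus_divide_left)

lemma qint_0 [simp]: "qint q 0 = 0"
  by (simp add: qint_def)

lemma qint_nonzero:
  fixes q :: "'a::field"
  assumes "q \<noteq> 0" and "\<forall>k::nat. k > 0 \<longrightarrow> q ^ k \<noteq> 1" and "m > 0"
  shows "qint q (int m) \<noteq> 0"
proof
  assume "qint q (int m) = 0"
  moreover have "q - inverse q \<noteq> 0"
  proof
    assume "q - inverse q = 0"
    then have "q ^ 2 = 1" using \<open>q \<noteq> 0\<close> by (simp add: field_simps power2_eq_square)
    then show False using assms(2) by auto
  qed
  ultimately have "q ^ m * q ^ m = 1"
    using \<open>q \<noteq> 0\<close> by (simp add: qint_def power_int_minus field_simps)
  then have "q ^ (2 * m) = 1" by (simp add: power_add mult_2)
  then show False using assms by auto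
qed

lemma qfact_nonzero:
  fixes q :: "'a::field"
  assumes "q \<noteq> 0" and "\<forall>k::nat. k > 0 \<longrightarrow> q ^ k \<noteq> 1"
  shows "qfact q j \<noteq> 0"
  using qint_nonzero[OF assms] by (simp add: qfact_def)

lemma qfact_Suc: "qfact q (Suc j) = qint q (int (Suc j)) * qfact q j"
  by (simp add: qfact_def prod.cl_ivl_Suc)

lemma height_simps [simp]:
  "height [] = 0" "height (c # u) = bar c + height u" "height (u @ v) = height u + height v"
  by (simp_all add: height_def)

lemma height_replicate [simp]:
  "height (replicate j X) = int j" "height (replicate j Y) = - int j"
  by (induction j) auto

fun step_weight :: "'a::field \<Rightarrow> nat \<Rightarrow> int \<Rightarrow> letter \<Rightarrow> 'a" where
  "step_weight q n h X = qint q (h - int n)"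
| "step_weight q n h Y = qint q h"

fun path_weight :: "'a::field \<Rightarrow> nat \<Rightarrow> int \<Rightarrow> int \<Rightarrow> word \<Rightarrow> 'a" where
  "path_weight q n h t [] = (if h = t \<and> 0 \<le> h \<and> h \<le> int n then 1 else 0)"
| "path_weight q n h t (c # u) = (if 0 \<le> h \<and> h \<le> int n
     then step_weight q n h c * path_weight q n (h + bar c) t u else 0)"

lemma path_weight_outside: "\<not> (0 \<le> h \<and> h \<le> int n) \<Longrightarrow> path_weight q n h t u = 0"
  by (cases u) auto

lemma path_weight_nonzero_imp_end: "path_weight q n h t u \<noteq> 0 \<Longrightarrow> t = h + height u"
  by (induction u arbitrary: h) (fastforce split: if_splits)+

lemma path_weight_append_height:
  "path_weight q n h t (u @ v)
    = path_weight q n h (h + height u) u * path_weight q n (h + height u) t v"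
  by (induction u arbitrary: h) (auto simp: path_weight_outside algebra_simps)

lemma path_weight_append:
  assumes "s = h + height u \<or> s = t - height v"
  shows "path_weight q n h t (u @ v) = path_weight q n h s u * path_weight q n s t v"
proof (cases "s = h + height u")
  case True
  then show ?thesis by (simp add: path_weight_append_height)
next
  case False
  with assms have "path_weight q n h s u = 0" "path_weight q n (h + height u) t v = 0"
    using path_weight_nonzero_imp_end by fastforce+
  then show ?thesis by (simp add: path_weight_append_height)
qed

lemma step_weight_swap: "step_weight q n (int n - h) (swap_letter c) = - step_weight q n h c"
  by (cases c) (simp_all add: qint_uminus[symmetric])

lemma path_weight_swap:
  "path_weight q n (int n - h) (int n - t) (map swap_letter u)
    = (-1) ^ length u * path_weight q n h t u"
proof (induction u arbitrary: h)
  case (Cons c u)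
  have "int n - h + bar (swap_letter c) = int n - (h + bar c)" by (cases c) auto
  with Cons.IH[of "h + bar c"] show ?case
    by (simp only: list.map path_weight.simps step_weight_swap) auto
qed auto

lemma path_weight_replicate_Y: "j \<le> n \<Longrightarrow> path_weight q n (int j) 0 (replicate j Y) = qfact q j"
  by (induction j) (simp_all add: qfact_def qfact_Suc)

lemma path_weight_replicate_X:
  assumes "j \<le> n" and "qfact q (n - j) \<noteq> 0"
  shows "path_weight q n 0 (int j) (replicate j X) = (-1) ^ j * qfact q n / qfact q (n - j)"
proof -
  have Y_rest: "path_weight q n (int (n - j)) 0 (replicate (n - j) Y) = qfact q (n - j)"
    by (rule path_weight_replicate_Y) simp
  have "qfact q n = path_weight q n (int n) 0 (replicate j Y @ replicate (n - j) Y)"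
    using assms(1) by (simp flip: replicate_add add: path_weight_replicate_Y)
  also have "\<dots> = path_weight q n (int n) (int (n - j)) (replicate j Y)
      * path_weight q n (int (n - j)) 0 (replicate (n - j) Y)"
    by (rule path_weight_append) (simp add: assms(1) of_nat_diff)
  also have "path_weight q n (int n) (int (n - j)) (replicate j Y)
      = (-1) ^ j * path_weight q n 0 (int j) (replicate j X)"
    using path_weight_swap[of q n 0 "int j" "replicate j X"] assms(1) by (simp add: of_nat_diff)
  finally show ?thesis using assms(2) by (simp add: Y_rest field_simps)
qed

lemma step_weight_eq_qint: "step_weight q n h c = qint q (h + - int n * ((bar c + 1) div 2))"
  by (cases c) simp_all

lemma path_weight_eq_prod:
  assumes "h \<le> int n"
  shows "path_weight q n h 0 u =
    (if (\<forall>i<length u. 0 \<le> h + height (take i u)) \<and> h + height u = 0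
     then \<Prod>i<length u. step_weight q n (h + height (take i u)) (u ! i) else 0)"
  using assms
proof (induction u arbitrary: h)
  case (Cons c u)
  have prefixes: "(\<forall>i<length (c # u). 0 \<le> h + height (take i (c # u)))
      \<longleftrightarrow> 0 \<le> h \<and> (\<forall>i<length u. 0 \<le> h + bar c + height (take i u))"
    by (auto simp: less_Suc_eq_0_disj algebra_simps)
  have prod: "(\<Prod>i<length (c # u). step_weight q n (h + height (take i (c # u))) ((c # u) ! i))
      = step_weight q n h c * (\<Prod>i<length u. step_weight q n (h + bar c + height (take i u)) (u ! i))"
    by (simp add: prod.lessThan_Suc_shift algebra_simps del: prod.lessThan_Suc)
  show ?case
  proof (cases "h + bar c \<le> int n")
    case True
    show ?thesis
      using Cons.IH[OF True] Cons.prems unfolding prefixes prod by (auto simp: ac_simps)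
  next
    case False
    \<comment> \<open>the path leaves the strip by an up-step from height \<open>n\<close>, whose weight is \<open>[0] = 0\<close>\<close>
    then have "h = int n" "c = X" using Cons.prems by (cases c; simp)+
    then show ?thesis unfolding prefixes prod by simp
  qed
qed simp

lemma Delta_eq_path_weight:
  "Delta q (- int n) N u = (if length u = 2 * N then path_weight q n 0 0 u else 0)"
  by (auto simp: Delta_def Cat_def catalan_def path_weight_eq_prod step_weight_eq_qint)

lemma path_weight_bordered:
  assumes "i \<le> n" and "j \<le> n"
  shows "path_weight q n 0 0 (replicate i X @ w @ replicate j Y)
    = path_weight q n 0 (int i) (replicate i X) * path_weight q n (int i) (int j) w * qfact q j"
proof -
  have "path_weight q n (int i) 0 (w @ replicate j Y)
      = path_weight q n (int i) (int j) w * path_weight q n (int j) 0 (replicate j Y)"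
    by (rule path_weight_append) simp
  then show ?thesis
    using assms by (simp add: path_weight_append_height path_weight_replicate_Y)
qed

lemma ser_neg_sq_Delta:
  "ser_neg_sq (Delta q (- int n)) k u = (if k = int (length u) \<and> even k
     then (-1) ^ (length u div 2) * path_weight q n 0 0 u else 0)"
  by (auto simp: ser_neg_sq_def Delta_eq_path_weight)

lemma ser_neg_sq_Delta_bordered:
  assumes "i \<le> n" and "j \<le> n" and "qfact q (n - i) \<noteq> 0"
  shows "ser_neg_sq (Delta q (- int n)) k (replicate i X @ w @ replicate j Y) =
    (if k = int (i + length w + j) \<and> even k
     then (-1) ^ ((i + length w + j) div 2 + i) * qfact q n / qfact q (n - i)
       * path_weight q n (int i) (int j) w * qfact q j
     else 0)"
proof -
  have "length (replicate i X @ w @ replicate j Y) = i + length w + j"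
    by simp
  moreover have "path_weight q n 0 0 (replicate i X @ w @ replicate j Y) = (-1) ^ i * qfact q n
      / qfact q (n - i) * path_weight q n (int i) (int j) w * qfact q j"
    using assms by (simp add: path_weight_bordered path_weight_replicate_X)
  ultimately show ?thesis
    by (simp only: ser_neg_sq_Delta power_add mult.assoc times_divide_eq_right times_divide_eq_left)
qed

lemma ser_neg_sq_DeltaT:
  "ser_neg_sq (DeltaT q m) k w = ser_neg_sq (Delta q m) k (map swap_letter w)"
  by (simp add: ser_neg_sq_def DeltaT_def)

lemma tmul_lpow_s_rpow_s_deletion:
  "tmul c e (lpow_s L (- int i) (rpow_s L' (- int j) S)) k w
    = c * S (k - e) (replicate i L @ w @ replicate j L')"
  by (simp add: tmul_def lpow_s_def rpow_s_def lpow_def rpow_def)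

definition Kmat_dual :: "'a::field \<Rightarrow> 'a \<Rightarrow> ('a \<Rightarrow> 'a) \<Rightarrow> nat \<Rightarrow> nat \<Rightarrow> nat \<Rightarrow> 'a tser" where
  "Kmat_dual q qh sr n a b = tmul (psi q qh sr n a b) (int b - int a - int n)
     (lpow_s Y (int b - int n - 1) (rpow_s X (1 - int a) (ser_neg_sq (DeltaT q (- int n)))))"

lemma Kmat_apply:
  assumes "1 \<le> a" "a \<le> n + 1" "1 \<le> b" "b \<le> n + 1" and "qfact q (n + 1 - b) \<noteq> 0"
  shows "Kmat q qh sr n a b k w = phi q qh sr n a b *
    (if k = int (length w) \<and> even (length w + n + b - a)
     then (-1) ^ ((length w + n + b - a) div 2 + (b - 1)) * qfact q n / qfact q (n + 1 - b)
       * path_weight q n (int (b - 1)) (int (n + 1 - a)) w * qfact q (n + 1 - a)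
     else 0)"
proof -
  have deletions: "1 - int b = - int (b - 1)" "int a - int n - 1 = - int (n + 1 - a)"
    using assms by linarith+
  have "b - 1 \<le> n" "n + 1 - a \<le> n" "qfact q (n - (b - 1)) \<noteq> 0"
    using assms by (simp_all add: Suc_diff_le)
  note bordered = ser_neg_sq_Delta_bordered[OF this]
  have "n - (b - 1) = n + 1 - b" "b - 1 + length w + (n + 1 - a) = length w + n + b - a"
    using assms by simp_all
  moreover have "k - (int a - int b - int n) = int (length w + n + b - a)
      \<and> even (k - (int a - int b - int n))
    \<longleftrightarrow> k = int (length w) \<and> even (length w + n + b - a)"
    using assms by (auto simp: of_nat_diff)
  ultimately show ?thesis
    unfolding Kmat_def deletions tmul_lpow_s_rpow_s_deletion bordered by (simp only:)
qed

lemma Kmat_dual_apply: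
  assumes "1 \<le> a" "a \<le> n + 1" "1 \<le> b" "b \<le> n + 1" and "qfact q (b - 1) \<noteq> 0"
  shows "Kmat_dual q qh sr n a b k w = psi q qh sr n a b *
    (if k = int (length w) \<and> even (length w + n + a - b)
     then (-1) ^ ((length w + n + a - b) div 2 + (n + 1 - b)) * qfact q n / qfact q (b - 1)
       * ((-1) ^ length w * path_weight q n (int (b - 1)) (int (n + 1 - a)) w) * qfact q (a - 1)
     else 0)"
proof -
  have deletions: "int b - int n - 1 = - int (n + 1 - b)" "1 - int a = - int (a - 1)"
    using assms by linarith+
  have "n + 1 - b \<le> n" "a - 1 \<le> n" "qfact q (n - (n + 1 - b)) \<noteq> 0"
    using assms by simp_all
  note bordered = ser_neg_sq_Delta_bordered[OF this]
  have "n - (n + 1 - b) = b - 1" "n + 1 - b + length w + (a - 1) = length w + n + a - b"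
    using assms by simp_all
  moreover have "k - (int b - int a - int n) = int (length w + n + a - b)
      \<and> even (k - (int b - int a - int n))
    \<longleftrightarrow> k = int (length w) \<and> even (length w + n + a - b)"
    using assms by (auto simp: of_nat_diff)
  moreover have "path_weight q n (int (n + 1 - b)) (int (a - 1)) (map swap_letter w)
      = (-1) ^ length w * path_weight q n (int (b - 1)) (int (n + 1 - a)) w"
    using path_weight_swap[of q n "int (b - 1)" "int (n + 1 - a)" w] assms
    by (simp add: of_nat_diff algebra_simps)
  ultimately show ?thesis
    unfolding Kmat_dual_def deletions tmul_lpow_s_rpow_s_deletion ser_neg_sq_DeltaT
      map_append map_replicate swap_letter.simps bordered length_map by (simp only:)
qed

lemma minus_one_power_eq: "even (i + j) \<Longrightarrow> (-1 :: 'a::ring_1) ^ i = (-1) ^ j"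
  by (simp add: minus_one_power_iff)

lemma border_signs:
  fixes L n a b :: nat
  assumes "1 \<le> a" "a \<le> n + 1" "1 \<le> b" "b \<le> n + 1" and "even (L + n + b - a)"
  shows "(-1 :: 'a::ring_1) ^ ((L + n + b - a) div 2 + (b - 1))
    = (-1) ^ ((L + n + a - b) div 2 + (n + 1 - b)) * (-1) ^ L"
proof -
  define P Q where "P = (L + n + b - a) div 2" and "Q = (L + n + a - b) div 2"
  have "(L + n + b - a) + (L + n + a - b) = 2 * (L + n)"
    using assms(1-4) by simp
  then have "P + Q = L + n"
    unfolding P_def Q_def using assms(5) by (simp flip: div_plus_div_distrib_dvd_left)
  then have "P + (b - 1) + (Q + (n + 1 - b) + L) = 2 * (L + n)"
    using assms(3,4) by simp
  then have "(-1 :: 'a) ^ (P + (b - 1)) = (-1) ^ (Q + (n + 1 - b) + L)"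
    by (intro minus_one_power_eq) (metis dvd_triv_left)
  then show ?thesis
    by (simp only: P_def Q_def power_add)
qed

lemma phi_eq_ratio_psi:
  assumes "sr (ratN q n a b / ratD q n a b)
    = ratN q n a b / ratD q n a b * sr (ratD q n a b / ratN q n a b)"
  shows "phi q qh sr n a b = ratN q n a b / ratD q n a b * psi q qh sr n a b"
  by (simp add: phi_def psi_def assms ac_simps)

lemma Kmat_eq_Kmat_dual:
  assumes a: "1 \<le> a" "a \<le> n + 1" and b: "1 \<le> b" "b \<le> n + 1"
    and qfact_nz: "\<And>j. qfact q j \<noteq> 0"
    and phi: "phi q qh sr n a b = ratN q n a b / ratD q n a b * psi q qh sr n a b"
  shows "Kmat q qh sr n a b = Kmat_dual q qh sr n a b"
proof (intro ext)
  fix k :: int and w :: word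
  define L where "L = length w"
  have "(L + n + b - a) + (L + n + a - b) = 2 * (L + n)"
    using a b by simp
  then have parity: "even (L + n + b - a) \<longleftrightarrow> even (L + n + a - b)"
    by (metis even_add even_mult_iff even_numeral)
  show "Kmat q qh sr n a b k w = Kmat_dual q qh sr n a b k w"
  proof (cases "k = int L \<and> even (L + n + b - a)")
    case True
    then have True': "k = int L \<and> even (L + n + a - b)"
      using parity by blast
    show ?thesis
      unfolding Kmat_apply[OF a b qfact_nz] Kmat_dual_apply[OF a b qfact_nz] L_def[symmetric]
        if_P[OF True] if_P[OF True'] phi ratN_def ratD_def border_signs[OF a b conjunct2[OF True]]
      using qfact_nz by (simp add: field_simps)
  next
    case False
    then have False': "\<not> (k = int L \<and> even (L + n + a - b))"
      using parity by blast
    show ?thesis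
      unfolding Kmat_apply[OF a b qfact_nz] Kmat_dual_apply[OF a b qfact_nz] L_def[symmetric]
        if_not_P[OF False] if_not_P[OF False'] by simp
  qed
qed

theorem proposition6p6:
  fixes q qh :: "'a::field_char_0" and sr :: "'a \<Rightarrow> 'a" and n a b :: nat
  assumes sqrt_ex: "\<forall>z::'a. \<exists>r. r ^ 2 = z"
    and q_nz: "q \<noteq> 0"
    and q_not_root: "\<forall>k::nat. k > 0 \<longrightarrow> q ^ k \<noteq> 1"
    and qh: "qh ^ 2 = q"
    and sr_sq: "\<forall>n' a' b'. 1 \<le> n' \<and> 1 \<le> a' \<and> a' \<le> n' + 1 \<and> 1 \<le> b' \<and> b' \<le> n' + 1 \<longrightarrow>
        (sr (ratN q n' a' b' / ratD q n' a' b')) ^ 2 = ratN q n' a' b' / ratD q n' a' b'"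
    and sr_compat: "\<forall>n' a' b'. 1 \<le> n' \<and> 1 \<le> a' \<and> a' \<le> n' + 1 \<and> 1 \<le> b' \<and> b' \<le> n' + 1 \<longrightarrow>
        sr (ratN q n' a' b' / ratD q n' a' b')
          = (ratN q n' a' b' / ratD q n' a' b') * sr (ratD q n' a' b' / ratN q n' a' b')"
    and n: "1 \<le> n"
    and a: "1 \<le> a" "a \<le> n + 1"
    and b: "1 \<le> b" "b \<le> n + 1"
  shows "Kmat q qh sr n a b =
    tmul (psi q qh sr n a b) (int b - int a - int n)
      (lpow_s Y (int b - int n - 1) (rpow_s X (1 - int a) (ser_neg_sq (DeltaT q (- int n)))))"
proof -
  \<comment> \<open>Of the square-root data only the compatibility \<open>sr_compat\<close> of the two choices matters.\<close>
  have "phi q qh sr n a b = ratN q n a b / ratD q n a b * psi q qh sr n a b"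
    using sr_compat n a b by (intro phi_eq_ratio_psi) blast
  moreover have "qfact q j \<noteq> 0" for j
    using q_nz q_not_root by (rule qfact_nonzero)
  ultimately have "Kmat q qh sr n a b = Kmat_dual q qh sr n a b"
    using a b by (intro Kmat_eq_Kmat_dual)
  then show ?thesis
    by (simp add: Kmat_dual_def)
qed

end
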